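(* Let $\Delta_0=\{x_0,\dots,x_d\}\subset\mathbb{R}^d$ be the vertex set of a regular simplex of edge length $1$ with centroid at the origin ($\sum_i x_i=0$), and let $\Delta'$ be the vertex set of another regular simplex of edge length $1$. If $\mathrm{dist}_H(\Delta_0,\Delta')<\tfrac12$, then there exist $\tau\in\mathbb{R}^d$ and $R\in O(d)$ such that the map $x\mapsto Rx+\tau$ maps $\Delta_0$ onto $\Delta'$ and \[ \mathrm{dist}_H(\Delta_0,\Delta')\;\ge\;\frac{1}{2\sqrt{d+1}}\bigl(\|R-I_d\|_2+\|\tau\|_2\bigr), \] where $\|\cdot\|_2$ on matrices is the operator (spectral) norm.
   Context: A regular simplex of edge length $1$ in $\mathbb{R}^d$ is given by its vertex set: $d+1$ points at pairwise distance exactly $1$. For nonempty compact $A,B\subset\mathbb{R}^d$, $\mathrm{dist}_H(A,B)=\max\{\sup_{a\in A}\inf_{b\in B}\|a-b\|_2,\ \sup_{b\in B}\inf_{a\in A}\|a-b\|_2\}$. *)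

theory Defs
  imports "HOL-Analysis.Analysis"
begin

text \<open>Hausdorff distance between nonempty compact sets, as in the paper
  (only used here for finite nonempty sets, where SUP/INF are attained).\<close>
definition hausdist_H :: "'a::metric_space set \<Rightarrow> 'a set \<Rightarrow> real" where
  "hausdist_H A B =
     max (SUP a\<in>A. INF b\<in>B. dist a b) (SUP b\<in>B. INF a\<in>A. dist a b)"

definition regular_unit_simplex :: "(nat \<Rightarrow> real^'n) \<Rightarrow> bool" where
  "regular_unit_simplex x \<longleftrightarrow>
     (\<forall>i\<le>CARD('n). \<forall>j\<le>CARD('n). i \<noteq> j \<longrightarrow> dist (x i) (x j) = 1)"

end

(* A centred regular unit simplex x_0, ..., x_d has Gram matrix x_i . x_j = [i = j]/2 - 1/(2(d+1)),
   hence spans R^d and is a tight frame: 2 sum_i (x_i . v) x_i = v.  Consequently, for another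
   centred regular unit simplex w, the map v |-> 2 sum_i (x_i . v) w_i is orthogonal and sends x_i
   to w_i.  Taking w_i = y_i - tau with tau the centroid of y gives R x_i + tau = y_i.

   If h = dist_H < 1/2, sending each x_i to a vertex of y within distance h is injective (the
   vertices are 1 apart), so after relabelling the displacements e_i = y_i - x_i have norm <= h.
   Since sum_i x_i = 0, tau is the mean of the e_i, so |tau| <= h, and the frame identity gives
   (R - I) v = 2 sum_i (x_i . v) e_i, whence ||R - I|| <= 2 h sqrt((d+1)/2) by Cauchy-Schwarz.
   For d >= 2 the two bounds add up to at most 2 sqrt(d+1) h; for d = 1 the 1 x 1 orthogonal
   matrix R moves x_0 by less than 2 |x_0| and is therefore the identity. *)

theory Submission
  imports Defs
begin

lemma inj_on_regular_unit_simplex: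
  fixes z :: "nat \<Rightarrow> real^'n"
  assumes "regular_unit_simplex z"
  shows "inj_on z {..CARD('n)}"
  using assms unfolding regular_unit_simplex_def inj_on_def by fastforce

lemma centred_regular_unit_simplex_inner_self:
  fixes z :: "nat \<Rightarrow> real^'n"
  assumes reg: "regular_unit_simplex z" and centred: "(\<Sum>i\<le>CARD('n). z i) = 0"
    and i: "i \<le> CARD('n)"
  shows "z i \<bullet> z i = 1/2 - 1 / (2 * (real CARD('n) + 1))"
proof -
  define d where "d = CARD('n)"
  define S where "S = (\<Sum>j\<le>d. z j \<bullet> z j)"
  have row: "(real d + 1) * (z a \<bullet> z a) + S = real d" if a: "a \<le> d" for a
  proof -
    have "(z a - z b) \<bullet> (z a - z b) = (if b = a then 0 else 1)" if "b \<le> d" for b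
      using reg a that unfolding regular_unit_simplex_def d_def
      by (auto simp: dist_norm power2_norm_eq_inner[symmetric])
    then have "(\<Sum>b\<le>d. (z a - z b) \<bullet> (z a - z b)) = card ({..d} - {a})"
      by (simp add: sum.If_cases Int_absorb1 Diff_eq[symmetric])
    also have "\<dots> = real d"
      using a by simp
    finally have "(\<Sum>b\<le>d. (z a - z b) \<bullet> (z a - z b)) = real d" .
    moreover have "(\<Sum>b\<le>d. (z a - z b) \<bullet> (z a - z b))
        = (real d + 1) * (z a \<bullet> z a) - 2 * (z a \<bullet> (\<Sum>b\<le>d. z b)) + S"
      by (simp add: S_def inner_diff inner_commute inner_sum_right sum.distrib sum_subtractf
          sum_distrib_left)
    ultimately show ?thesis
      using centred by (simp add: d_def)
  qed
  have "(\<Sum>a\<le>d. (real d + 1) * (z a \<bullet> z a) + S) = (real d + 1) * real d"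
    using row by simp
  then have "(real d + 1) * (2 * S) = (real d + 1) * real d"
    by (simp add: sum.distrib S_def sum_distrib_left[symmetric] algebra_simps)
  then have "S = real d / 2"
    by simp
  then show ?thesis
    using row[of i] i by (simp add: d_def field_simps)
qed

lemma centred_regular_unit_simplex_inner:
  fixes z :: "nat \<Rightarrow> real^'n"
  assumes reg: "regular_unit_simplex z" and centred: "(\<Sum>i\<le>CARD('n). z i) = 0"
    and i: "i \<le> CARD('n)" and j: "j \<le> CARD('n)"
  shows "z i \<bullet> z j = (if i = j then 1/2 else 0) - 1 / (2 * (real CARD('n) + 1))"
proof (cases "i = j")
  case True
  then show ?thesis
    using centred_regular_unit_simplex_inner_self[OF reg centred i] by simp
next
  case False
  have "1 = (z i - z j) \<bullet> (z i - z j)"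
    using reg i j False unfolding regular_unit_simplex_def
    by (auto simp: dist_norm power2_norm_eq_inner[symmetric])
  also have "\<dots> = z i \<bullet> z i + z j \<bullet> z j - 2 * (z i \<bullet> z j)"
    by (simp add: inner_diff inner_commute)
  finally show ?thesis
    using False centred_regular_unit_simplex_inner_self[OF reg centred] i j by simp
qed

lemma independent_centred_regular_unit_simplex:
  fixes z :: "nat \<Rightarrow> real^'n"
  assumes reg: "regular_unit_simplex z" and centred: "(\<Sum>i\<le>CARD('n). z i) = 0"
  shows "independent (z ` {1..CARD('n)})"
proof -
  define d where "d = CARD('n)"
  define N where "N = real d + 1"
  have inj: "inj_on z {1..d}"
    using inj_on_regular_unit_simplex[OF reg] unfolding d_def by (rule inj_on_subset) auto
  have "c (z j) = 0" if dep: "(\<Sum>v\<in>z ` {1..d}. c v *\<^sub>R v) = 0" and j: "j \<in> {1..d}" for c j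
  proof -
    define C where "C = (\<Sum>i=1..d. c (z i))"
    have coeff: "c (z k) = C / N" if k: "k \<in> {1..d}" for k
    proof -
      have "0 = (\<Sum>i=1..d. c (z i) *\<^sub>R z i) \<bullet> z k"
        using dep unfolding sum.reindex[OF inj] comp_def by simp
      also have "\<dots> = (\<Sum>i=1..d. (if i = k then c (z i) / 2 else 0) - c (z i) / (2 * N))"
        unfolding inner_sum_left inner_scaleR_left
      proof (intro sum.cong refl)
        fix i assume "i \<in> {1..d}"
        then have "z i \<bullet> z k = (if i = k then 1/2 else 0) - 1 / (2 * N)"
          using k centred_regular_unit_simplex_inner[OF reg centred] by (simp add: N_def d_def)
        then show "c (z i) * (z i \<bullet> z k) = (if i = k then c (z i) / 2 else 0) - c (z i) / (2 * N)"
          by (simp add: right_diff_distrib)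
      qed
      also have "\<dots> = c (z k) / 2 - C / (2 * N)"
        using k by (simp add: sum_subtractf C_def sum_divide_distrib)
      finally show ?thesis
        by (simp add: N_def field_simps)
    qed
    have "C = (\<Sum>i=1..d. c (z i))"
      by (simp add: C_def)
    also have "\<dots> = (\<Sum>i=1..d. C / N)"
      using coeff by (intro sum.cong) auto
    finally have "C = real d * C / N"
      by simp
    then have "C = 0"
      by (simp add: N_def field_simps)
    then show ?thesis
      using coeff[OF j] by simp
  qed
  then show ?thesis
    unfolding independent_explicit d_def by blast
qed

lemma span_centred_regular_unit_simplex:
  fixes z :: "nat \<Rightarrow> real^'n"
  assumes reg: "regular_unit_simplex z" and centred: "(\<Sum>i\<le>CARD('n). z i) = 0"
  shows "span (z ` {1..CARD('n)}) = UNIV"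
proof -
  have "card (z ` {1..CARD('n)}) = dim (UNIV :: (real^'n) set)"
    using inj_on_regular_unit_simplex[OF reg] by (simp add: card_image inj_on_subset)
  then have "independent (z ` {1..CARD('n)}) \<longleftrightarrow> UNIV \<subseteq> span (z ` {1..CARD('n)})"
    by (intro card_eq_dim) auto
  then show ?thesis
    using independent_centred_regular_unit_simplex[OF reg centred] by auto
qed

lemma centred_regular_unit_simplex_tight_frame:
  fixes z :: "nat \<Rightarrow> real^'n"
  assumes reg: "regular_unit_simplex z" and centred: "(\<Sum>i\<le>CARD('n). z i) = 0"
  shows "2 *\<^sub>R (\<Sum>i\<le>CARD('n). (z i \<bullet> v) *\<^sub>R z i) = v"
proof -
  define T where "T v = 2 *\<^sub>R (\<Sum>i\<le>CARD('n). (z i \<bullet> v) *\<^sub>R z i) - v" for v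
  have lin: "linear T"
    unfolding T_def
    by (rule linearI) (simp_all add: sum.distrib scaleR_sum_right algebra_simps)
  have vertex: "T (z j) = 0" if j: "j \<le> CARD('n)" for j
  proof -
    have "(\<Sum>i\<le>CARD('n). (z i \<bullet> z j) *\<^sub>R z i)
        = (\<Sum>i\<le>CARD('n). (if i = j then (1/2) *\<^sub>R z i else 0)
                              - (1 / (2 * (real CARD('n) + 1))) *\<^sub>R z i)"
      using j centred_regular_unit_simplex_inner[OF reg centred]
      by (intro sum.cong) (auto simp: scaleR_diff_left)
    also have "\<dots> = (1/2) *\<^sub>R z j"
      using j centred by (simp add: sum_subtractf flip: scaleR_sum_right)
    finally show ?thesis
      by (simp add: T_def)
  qed
  then have "T u = 0" if "u \<in> z ` {1..CARD('n)}" for u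
    using that by auto
  then have "T v = 0"
    using linear_eq_0_on_span[OF lin] span_centred_regular_unit_simplex[OF reg centred] by blast
  then show ?thesis
    by (simp add: T_def)
qed

lemma centred_regular_unit_simplex_sum_inner_square:
  fixes z :: "nat \<Rightarrow> real^'n"
  assumes reg: "regular_unit_simplex z" and centred: "(\<Sum>i\<le>CARD('n). z i) = 0"
  shows "(\<Sum>i\<le>CARD('n). (z i \<bullet> v)\<^sup>2) = (norm v)\<^sup>2 / 2"
proof -
  have "(\<Sum>i\<le>CARD('n). (z i \<bullet> v)\<^sup>2) = v \<bullet> (\<Sum>i\<le>CARD('n). (z i \<bullet> v) *\<^sub>R z i)"
    by (simp add: inner_sum_right power2_eq_square inner_commute)
  also have "\<dots> = v \<bullet> v / 2"
    using arg_cong[OF centred_regular_unit_simplex_tight_frame[OF reg centred, of v], of "\<lambda>u. v \<bullet> u"]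
    by simp
  finally show ?thesis
    by (simp add: power2_norm_eq_inner)
qed

lemma centred_regular_unit_simplex_sum_abs_inner_le:
  fixes z :: "nat \<Rightarrow> real^'n"
  assumes reg: "regular_unit_simplex z" and centred: "(\<Sum>i\<le>CARD('n). z i) = 0"
  shows "(\<Sum>i\<le>CARD('n). \<bar>z i \<bullet> v\<bar>) \<le> sqrt ((real CARD('n) + 1) / 2) * norm v"
proof -
  have "(\<Sum>i\<le>CARD('n). \<bar>z i \<bullet> v\<bar> * 1)\<^sup>2
      \<le> (\<Sum>i\<le>CARD('n). \<bar>z i \<bullet> v\<bar>\<^sup>2) * (\<Sum>i\<le>CARD('n). 1\<^sup>2)"
    by (rule Cauchy_Schwarz_ineq_sum)
  also have "\<dots> = (real CARD('n) + 1) / 2 * (norm v)\<^sup>2"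
    by (simp add: centred_regular_unit_simplex_sum_inner_square[OF reg centred])
  finally have "(\<Sum>i\<le>CARD('n). \<bar>z i \<bullet> v\<bar>) \<le> sqrt ((real CARD('n) + 1) / 2 * (norm v)\<^sup>2)"
    by (intro real_le_rsqrt) simp
  also have "\<dots> = sqrt ((real CARD('n) + 1) / 2) * norm v"
    by (simp only: real_sqrt_mult real_sqrt_abs abs_norm_cancel)
  finally show ?thesis .
qed

lemma norm_sum_scaleR_eq_if_inner_eq:
  fixes x w :: "'i \<Rightarrow> 'a::real_inner"
  assumes "\<And>i k. i \<in> I \<Longrightarrow> k \<in> I \<Longrightarrow> w i \<bullet> w k = x i \<bullet> x k"
  shows "norm (\<Sum>i\<in>I. b i *\<^sub>R w i) = norm (\<Sum>i\<in>I. b i *\<^sub>R x i)"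
proof -
  have "(\<Sum>i\<in>I. b i *\<^sub>R w i) \<bullet> (\<Sum>i\<in>I. b i *\<^sub>R w i)
      = (\<Sum>i\<in>I. b i * (\<Sum>k\<in>I. b k * (w k \<bullet> w i)))"
    by (simp only: inner_sum_left inner_sum_right inner_scaleR_left inner_scaleR_right)
  also have "\<dots> = (\<Sum>i\<in>I. b i * (\<Sum>k\<in>I. b k * (x k \<bullet> x i)))"
    using assms by simp
  also have "\<dots> = (\<Sum>i\<in>I. b i *\<^sub>R x i) \<bullet> (\<Sum>i\<in>I. b i *\<^sub>R x i)"
    by (simp only: inner_sum_left inner_sum_right inner_scaleR_left inner_scaleR_right)
  finally show ?thesis
    by (simp add: norm_eq_sqrt_inner)
qed

lemma orthogonal_matrix_between_centred_regular_unit_simplices: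
  fixes x w :: "nat \<Rightarrow> real^'n"
  assumes rx: "regular_unit_simplex x" and cx: "(\<Sum>i\<le>CARD('n). x i) = 0"
    and rw: "regular_unit_simplex w" and cw: "(\<Sum>i\<le>CARD('n). w i) = 0"
  shows "\<exists>R. orthogonal_matrix R \<and> (\<forall>j\<le>CARD('n). R *v x j = w j)"
proof -
  define f where "f v = (\<Sum>i\<le>CARD('n). (2 * (x i \<bullet> v)) *\<^sub>R w i)" for v
  have gram: "w i \<bullet> w k = x i \<bullet> x k" if "i \<in> {..CARD('n)}" "k \<in> {..CARD('n)}" for i k
    using that centred_regular_unit_simplex_inner[OF rx cx] centred_regular_unit_simplex_inner[OF rw cw] by simp
  have lin: "linear f"
    unfolding f_def
    by (rule linearI) (simp_all add: sum.distrib scaleR_sum_right algebra_simps)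
  have "norm (f v) = norm v" for v
    using norm_sum_scaleR_eq_if_inner_eq[where I = "{..CARD('n)}", OF gram]
      centred_regular_unit_simplex_tight_frame[OF rx cx, of v]
    by (simp add: f_def scaleR_sum_right)
  then have "orthogonal_matrix (matrix f)"
    using lin orthogonal_transformation orthogonal_transformation_matrix by blast
  moreover have "matrix f *v v = f v" for v
    using matrix_vector_mul(2)[OF lin] by metis
  moreover have "f (x j) = w j" if "j \<le> CARD('n)" for j
  proof -
    have "f (x j) = 2 *\<^sub>R (\<Sum>i\<le>CARD('n). (w i \<bullet> w j) *\<^sub>R w i)"
      unfolding f_def scaleR_sum_right using gram that by (intro sum.cong) auto
    then show ?thesis
      using centred_regular_unit_simplex_tight_frame[OF rw cw] by simp
  qed
  ultimately show ?thesis
    by metis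
qed

lemma matrix_minus_id_mult_eq_sum_displacements:
  fixes x y :: "nat \<Rightarrow> real^'n" and A :: "real^'n^'n"
  assumes rx: "regular_unit_simplex x" and cx: "(\<Sum>i\<le>CARD('n). x i) = 0"
    and motion: "\<And>i. i \<le> CARD('n) \<Longrightarrow> A *v x i + \<tau> = y i"
  shows "(A - mat 1) *v v = 2 *\<^sub>R (\<Sum>i\<le>CARD('n). (x i \<bullet> v) *\<^sub>R (y i - x i))"
proof -
  have coeffs: "(\<Sum>i\<le>CARD('n). x i \<bullet> v) = 0"
    using cx by (simp flip: inner_sum_left)
  define S where "S = (\<Sum>i\<le>CARD('n). (x i \<bullet> v) *\<^sub>R x i)"
  have "(A - mat 1) *v v = A *v (2 *\<^sub>R S) - 2 *\<^sub>R S"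
    using centred_regular_unit_simplex_tight_frame[OF rx cx, of v]
    by (simp add: S_def matrix_vector_mult_diff_rdistrib)
  also have "\<dots> = 2 *\<^sub>R (\<Sum>i\<le>CARD('n). (x i \<bullet> v) *\<^sub>R (A *v x i - x i))"
    by (simp add: S_def vec.sum matrix_vector_mult_scaleR scaleR_diff_right sum_subtractf)
  also have "\<dots> = 2 *\<^sub>R (\<Sum>i\<le>CARD('n). (x i \<bullet> v) *\<^sub>R (y i - x i) - (x i \<bullet> v) *\<^sub>R \<tau>)"
  proof (intro arg_cong[where f = "scaleR 2"] sum.cong refl)
    fix i assume "i \<in> {..CARD('n)}"
    then have "A *v x i = y i - \<tau>"
      using motion by (simp add: eq_diff_eq)
    then show "(x i \<bullet> v) *\<^sub>R (A *v x i - x i) = (x i \<bullet> v) *\<^sub>R (y i - x i) - (x i \<bullet> v) *\<^sub>R \<tau>"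
      by (simp only:) (simp add: algebra_simps)
  qed
  also have "\<dots> = 2 *\<^sub>R (\<Sum>i\<le>CARD('n). (x i \<bullet> v) *\<^sub>R (y i - x i))"
    using coeffs by (simp add: sum_subtractf flip: scaleR_sum_left)
  finally show ?thesis .
qed

lemma norm_translation_le_max_displacement:
  fixes x y :: "'i \<Rightarrow> real^'n" and A :: "real^'n^'n"
  assumes "finite I" "I \<noteq> {}" and centred: "(\<Sum>i\<in>I. x i) = 0"
    and motion: "\<And>i. i \<in> I \<Longrightarrow> A *v x i + \<tau> = y i"
    and close: "\<And>i. i \<in> I \<Longrightarrow> norm (y i - x i) \<le> h"
  shows "norm \<tau> \<le> h"
proof -
  have "(\<Sum>i\<in>I. y i - x i) = (\<Sum>i\<in>I. A *v x i - x i + \<tau>)"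
    using motion by (intro sum.cong) (auto simp: algebra_simps)
  also have "\<dots> = real (card I) *\<^sub>R \<tau>"
    using centred
    by (simp add: sum.distrib sum_subtractf sum_constant_scaleR del: sum_constant flip: vec.sum)
  finally have "real (card I) * norm \<tau> = norm (\<Sum>i\<in>I. y i - x i)"
    by simp
  also have "\<dots> \<le> (\<Sum>i\<in>I. norm (y i - x i))"
    by (rule norm_sum)
  also have "\<dots> \<le> real (card I) * h"
    using close sum_bounded_above[of I "\<lambda>i. norm (y i - x i)" h] by simp
  finally have "real (card I) * norm \<tau> \<le> real (card I) * h" .
  moreover have "0 < real (card I)"
    using assms(1,2) by (simp add: card_gt_0_iff)
  ultimately show ?thesis
    by simp
qed

lemma onorm_matrix_minus_id_le:
  fixes x y :: "nat \<Rightarrow> real^'n" and A :: "real^'n^'n"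
  assumes rx: "regular_unit_simplex x" and cx: "(\<Sum>i\<le>CARD('n). x i) = 0"
    and motion: "\<And>i. i \<le> CARD('n) \<Longrightarrow> A *v x i + \<tau> = y i"
    and close: "\<And>i. i \<le> CARD('n) \<Longrightarrow> norm (y i - x i) \<le> h"
  shows "onorm (\<lambda>v. (A - mat 1) *v v) \<le> 2 * h * sqrt ((real CARD('n) + 1) / 2)"
proof (rule onorm_le)
  fix v
  have h: "0 \<le> h"
    using close[of 0] norm_ge_zero order_trans by blast
  have "norm ((A - mat 1) *v v) = 2 * norm (\<Sum>i\<le>CARD('n). (x i \<bullet> v) *\<^sub>R (y i - x i))"
    by (simp add: matrix_minus_id_mult_eq_sum_displacements[OF rx cx motion])
  also have "\<dots> \<le> 2 * (\<Sum>i\<le>CARD('n). \<bar>x i \<bullet> v\<bar> * norm (y i - x i))"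
    using norm_sum[of "\<lambda>i. (x i \<bullet> v) *\<^sub>R (y i - x i)" "{..CARD('n)}"] by simp
  also have "\<dots> \<le> 2 * (\<Sum>i\<le>CARD('n). \<bar>x i \<bullet> v\<bar> * h)"
    using close by (intro mult_left_mono sum_mono) (auto intro: mult_left_mono)
  also have "\<dots> = 2 * (h * (\<Sum>i\<le>CARD('n). \<bar>x i \<bullet> v\<bar>))"
    by (simp add: sum_distrib_left mult.commute)
  also have "\<dots> \<le> 2 * (h * (sqrt ((real CARD('n) + 1) / 2) * norm v))"
    using centred_regular_unit_simplex_sum_abs_inner_le[OF rx cx] h by (simp add: mult_left_mono)
  finally show "norm ((A - mat 1) *v v) \<le> 2 * h * sqrt ((real CARD('n) + 1) / 2) * norm v"
    by (simp add: mult.assoc)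
qed

lemma orthogonal_matrix_eq_mat_1_if_CARD_1:
  fixes R :: "real^'n^'n" and u :: "real^'n"
  assumes card: "CARD('n) = 1" and orth: "orthogonal_matrix R"
    and moved: "norm (R *v u - u) < 2 * norm u"
  shows "R = mat 1"
proof -
  obtain k :: 'n where UNIV: "UNIV = {k}"
    using card by (rule card_1_singletonE)
  have index: "i = k" for i :: 'n
    using UNIV by auto
  define r where "r = R $ k $ k"
  have "(transpose R ** R) $ k $ k = 1"
    using orth by (simp add: orthogonal_matrix mat_def)
  then have "r * r = 1"
    by (simp add: r_def matrix_matrix_mult_def transpose_def UNIV)
  have Ru: "R *v u = r *\<^sub>R u"
    by (simp add: vec_eq_iff matrix_vector_mult_def UNIV r_def) (metis (full_types) index)
  then have "R *v u - u = (r - 1) *\<^sub>R u"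
    by (simp add: scaleR_diff_left)
  then have "\<bar>r - 1\<bar> * norm u < 2 * norm u"
    using moved by simp
  then have "r \<noteq> -1"
    by auto
  with \<open>r * r = 1\<close> have "r = 1"
    by (metis square_eq_1_iff)
  then show ?thesis
    by (simp add: vec_eq_iff mat_def r_def) (metis (full_types) index)
qed

lemma two_sqrt_half_add_one_le_two_sqrt:
  fixes N :: real
  assumes "3 \<le> N"
  shows "2 * sqrt (N / 2) + 1 \<le> 2 * sqrt N"
proof -
  have half: "2 * sqrt (N / 2) = sqrt (2 * N)"
    using real_sqrt_mult[of 4 "N / 2"] by simp
  have "N * 3 \<le> N * N"
    using assms by (intro mult_left_mono) auto
  then have "2 * N \<le> (N - 1/2)\<^sup>2"
    by (simp add: power2_eq_square algebra_simps)
  then have "sqrt (2 * N) \<le> N - 1/2"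
    using assms by (intro real_le_lsqrt) auto
  then have "(sqrt (2 * N) + 1)\<^sup>2 \<le> 4 * N"
    using assms by (simp add: power2_sum)
  then have "sqrt (2 * N) + 1 \<le> sqrt (4 * N)"
    by (rule real_le_rsqrt)
  then show ?thesis
    by (simp add: half real_sqrt_mult)
qed

lemma regular_unit_simplex_rigid_motion:
  fixes x y :: "nat \<Rightarrow> real^'n"
  assumes rx: "regular_unit_simplex x" and cx: "(\<Sum>i\<le>CARD('n). x i) = 0"
    and ry: "regular_unit_simplex y"
  shows "\<exists>\<tau> R. orthogonal_matrix R \<and> (\<forall>i\<le>CARD('n). R *v x i + \<tau> = y i)"
proof -
  define \<tau> where "\<tau> = (1 / (real CARD('n) + 1)) *\<^sub>R (\<Sum>i\<le>CARD('n). y i)"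
  define w where "w i = y i - \<tau>" for i
  have "regular_unit_simplex w"
    using ry by (simp add: regular_unit_simplex_def w_def dist_norm)
  moreover have "(\<Sum>i\<le>CARD('n). w i) = 0"
    by (simp add: w_def \<tau>_def sum_subtractf sum_constant_scaleR add.commute del: sum_constant)
  ultimately obtain R where "orthogonal_matrix R" and "\<forall>j\<le>CARD('n). R *v x j = w j"
    using orthogonal_matrix_between_centred_regular_unit_simplices[OF rx cx] by blast
  then have "orthogonal_matrix R \<and> (\<forall>i\<le>CARD('n). R *v x i + \<tau> = y i)"
    by (simp add: w_def)
  then show ?thesis
    by blast
qed

lemma rigid_motion_deviation_le:
  fixes x y :: "nat \<Rightarrow> real^'n" and R :: "real^'n^'n"
  assumes rx: "regular_unit_simplex x" and cx: "(\<Sum>i\<le>CARD('n). x i) = 0"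
    and orth: "orthogonal_matrix R"
    and motion: "\<And>i. i \<le> CARD('n) \<Longrightarrow> R *v x i + \<tau> = y i"
    and close: "\<And>i. i \<le> CARD('n) \<Longrightarrow> norm (y i - x i) \<le> h" and small: "h < 1/2"
  shows "onorm (\<lambda>v. (R - mat 1) *v v) + norm \<tau> \<le> 2 * sqrt (real CARD('n) + 1) * h"
proof -
  have h: "0 \<le> h"
    using close[of 0] norm_ge_zero order_trans by blast
  have \<tau>: "norm \<tau> \<le> h"
    using norm_translation_le_max_displacement[of "{..CARD('n)}" x R \<tau> y h] cx motion close
    by auto
  show ?thesis
  proof (cases "CARD('n) = 1")
    case True
    \<comment> \<open>The estimate of the other case would only give 3 h, which exceeds 2 sqrt 2 h.\<close>
    have "x 0 \<bullet> x 0 = (1/2)\<^sup>2"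
      using centred_regular_unit_simplex_inner_self[OF rx cx, of 0] True by (simp add: power2_eq_square)
    then have "norm (x 0) = 1/2"
      by (simp add: norm_eq_sqrt_inner)
    have "R *v x 0 - x 0 = (y 0 - x 0) - \<tau>"
      using motion[of 0] by (simp add: eq_diff_eq)
    then have "norm (R *v x 0 - x 0) \<le> norm (y 0 - x 0) + norm \<tau>"
      by (metis norm_triangle_ineq4)
    with \<open>norm (x 0) = 1/2\<close> have "norm (R *v x 0 - x 0) < 2 * norm (x 0)"
      using close[of 0] \<tau> small by simp
    then have "R = mat 1"
      using orthogonal_matrix_eq_mat_1_if_CARD_1[OF True orth] by blast
    have "1 \<le> 2 * sqrt (2::real)"
      using real_sqrt_ge_1_iff[of 2] by linarith
    then have "h \<le> 2 * sqrt 2 * h"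
      using h mult_right_mono[of 1 "2 * sqrt 2" h] by simp
    with \<open>R = mat 1\<close> \<tau> True show ?thesis
      by (simp add: onorm_zero)
  next
    case False
    then have "3 \<le> real CARD('n) + 1"
      using zero_less_card_finite[where 'a = 'n] by linarith
    then have "h * (2 * sqrt ((real CARD('n) + 1) / 2) + 1) \<le> h * (2 * sqrt (real CARD('n) + 1))"
      using h by (intro mult_left_mono two_sqrt_half_add_one_le_two_sqrt)
    then have "2 * h * sqrt ((real CARD('n) + 1) / 2) + h \<le> 2 * sqrt (real CARD('n) + 1) * h"
      by (simp add: algebra_simps)
    then show ?thesis
      using onorm_matrix_minus_id_le[OF rx cx motion close] \<tau> by linarith
  qed
qed

lemma exists_dist_le_hausdist_H:
  fixes A B :: "'a::metric_space set"
  assumes "finite A" "finite B" "B \<noteq> {}" "a \<in> A"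
  shows "\<exists>b\<in>B. dist a b \<le> hausdist_H A B"
proof -
  have "Min (dist a ` B) \<in> dist a ` B"
    using assms(2,3) by simp
  then obtain b where "b \<in> B" and "dist a b = Min (dist a ` B)"
    by force
  moreover have "Min (dist a ` B) = (INF b\<in>B. dist a b)"
    using assms(2,3) by (simp add: cInf_eq_Min)
  ultimately have b: "b \<in> B" "dist a b = (INF b\<in>B. dist a b)"
    by simp_all
  have "(INF b\<in>B. dist a b) \<le> (SUP a\<in>A. INF b\<in>B. dist a b)"
    using assms by (intro cSUP_upper) auto
  then have "dist a b \<le> hausdist_H A B"
    using b(2) by (simp add: hausdist_H_def le_max_iff_disj)
  with b(1) show ?thesis
    by blast
qed

lemma regular_unit_simplex_hausdist_H_matching:
  fixes x y :: "nat \<Rightarrow> real^'n"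
  assumes rx: "regular_unit_simplex x"
    and small: "hausdist_H (x ` {..CARD('n)}) (y ` {..CARD('n)}) < 1/2"
  shows "\<exists>\<sigma>. bij_betw \<sigma> {..CARD('n)} {..CARD('n)} \<and>
           (\<forall>i\<le>CARD('n). dist (x i) (y (\<sigma> i)) \<le> hausdist_H (x ` {..CARD('n)}) (y ` {..CARD('n)}))"
proof -
  define h where "h = hausdist_H (x ` {..CARD('n)}) (y ` {..CARD('n)})"
  have "\<forall>i\<in>{..CARD('n)}. \<exists>j\<in>{..CARD('n)}. dist (x i) (y j) \<le> h"
    using exists_dist_le_hausdist_H[of "x ` {..CARD('n)}" "y ` {..CARD('n)}"] by (auto simp: h_def)
  then obtain \<sigma> where \<sigma>: "\<And>i. i \<le> CARD('n) \<Longrightarrow> \<sigma> i \<le> CARD('n) \<and> dist (x i) (y (\<sigma> i)) \<le> h"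
    by (metis atMost_iff)
  have "inj_on \<sigma> {..CARD('n)}"
  proof (rule inj_onI, rule ccontr)
    fix i k assume ik: "i \<in> {..CARD('n)}" "k \<in> {..CARD('n)}" "\<sigma> i = \<sigma> k" "i \<noteq> k"
    then have "1 = dist (x i) (x k)"
      using rx by (simp add: regular_unit_simplex_def)
    also have "\<dots> \<le> dist (x i) (y (\<sigma> i)) + dist (x k) (y (\<sigma> k))"
      using ik(3) by (metis dist_triangle2)
    also have "\<dots> \<le> 2 * h"
      using \<sigma>[of i] \<sigma>[of k] ik(1,2) by simp
    finally show False
      using small by (simp add: h_def)
  qed
  moreover have "\<sigma> ` {..CARD('n)} \<subseteq> {..CARD('n)}"
    using \<sigma> by auto
  ultimately have "bij_betw \<sigma> {..CARD('n)} {..CARD('n)}"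
    by (simp add: bij_betw_def endo_inj_surj)
  then show ?thesis
    using \<sigma> by (auto simp: h_def)
qed

lemma regular_unit_simplex_comp_bij:
  fixes y :: "nat \<Rightarrow> real^'n"
  assumes "regular_unit_simplex y" "bij_betw \<sigma> {..CARD('n)} {..CARD('n)}"
  shows "regular_unit_simplex (y \<circ> \<sigma>)"
  unfolding regular_unit_simplex_def
proof (intro allI impI)
  fix i j assume "i \<le> CARD('n)" "j \<le> CARD('n)" "i \<noteq> j"
  then have "\<sigma> i \<le> CARD('n)" "\<sigma> j \<le> CARD('n)" "\<sigma> i \<noteq> \<sigma> j"
    using assms(2) by (auto simp: bij_betw_def inj_on_eq_iff)
  then show "dist ((y \<circ> \<sigma>) i) ((y \<circ> \<sigma>) j) = 1"
    using assms(1) by (simp add: regular_unit_simplex_def)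
qed

theorem mainTheorem10:
  fixes x y :: "nat \<Rightarrow> real^'n"
  assumes "regular_unit_simplex x"
    and "(\<Sum>i\<le>CARD('n). x i) = 0"
    and "regular_unit_simplex y"
    and "hausdist_H (x ` {..CARD('n)}) (y ` {..CARD('n)}) < 1/2"
  shows "\<exists>(\<tau>::real^'n) (R::real^'n^'n).
           orthogonal_matrix R \<and>
           (\<lambda>v. R *v v + \<tau>) ` (x ` {..CARD('n)}) = y ` {..CARD('n)} \<and>
           hausdist_H (x ` {..CARD('n)}) (y ` {..CARD('n)})
             \<ge> 1 / (2 * sqrt (real CARD('n) + 1)) *
                 (onorm (\<lambda>v. (R - mat 1) *v v) + norm \<tau>)"
proof -
  let ?h = "hausdist_H (x ` {..CARD('n)}) (y ` {..CARD('n)})"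
  obtain \<sigma> where \<sigma>: "bij_betw \<sigma> {..CARD('n)} {..CARD('n)}"
    and close: "\<forall>i\<le>CARD('n). dist (x i) (y (\<sigma> i)) \<le> ?h"
    using regular_unit_simplex_hausdist_H_matching[OF assms(1,4)] by blast
  obtain \<tau> R where orth: "orthogonal_matrix R"
    and motion: "\<forall>i\<le>CARD('n). R *v x i + \<tau> = (y \<circ> \<sigma>) i"
    using regular_unit_simplex_rigid_motion[OF assms(1,2) regular_unit_simplex_comp_bij[OF assms(3) \<sigma>]]
    by blast
  have "onorm (\<lambda>v. (R - mat 1) *v v) + norm \<tau> \<le> 2 * sqrt (real CARD('n) + 1) * ?h"
    using rigid_motion_deviation_le[OF assms(1,2) orth, of \<tau> "y \<circ> \<sigma>" ?h] motion close assms(4)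
    by (simp add: dist_norm norm_minus_commute)
  then have "?h \<ge> 1 / (2 * sqrt (real CARD('n) + 1)) * (onorm (\<lambda>v. (R - mat 1) *v v) + norm \<tau>)"
    by (simp add: divide_simps mult.commute)
  moreover have "(\<lambda>v. R *v v + \<tau>) ` (x ` {..CARD('n)}) = y ` \<sigma> ` {..CARD('n)}"
    unfolding image_image using motion by (intro image_cong) auto
  ultimately show ?thesis
    using orth bij_betw_imp_surj_on[OF \<sigma>] by auto
qed

end
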